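(* Let $n=2p$ and let $B$ be a skew-symmetric $n\times n$ matrix such that $JB$ is a regular skew-Hamiltonian matrix. Then $$\{JA:\ A\in\Lambda^2V,\ [JA,JB]=0\}=\langle (JB)^k:\ k=0,\dots,p-1\rangle,$$ and this space has dimension $p=n/2$.
   Context: $V=\mathbb C^n$, $n=2p$, $\Lambda^2V$ (resp. $S^2V$) = skew-symmetric (resp. symmetric) $n\times n$ complex matrices, $J=\begin{bmatrix}0&I_p\\-I_p&0\end{bmatrix}$, $[X,Y]=XY-YX$. A matrix $W$ is skew-Hamiltonian if $JW={}^tWJ$, equivalently $W=JB$ with $B$ skew-symmetric. Every skew-Hamiltonian $W$ is conjugate by a symplectic matrix $M\in\mathrm{Sp}(n)$ to a matrix $\begin{bmatrix}P&0\\0&{}^tP\end{bmatrix}$ with $P$ a $p\times p$ matrix; $W$ is called regular if the minimal polynomial of such a $P$ has degree $p$ (i.e. equals its characteristic polynomial). *)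

theory Defs
  imports "Jordan_Normal_Form.VS_Connect"
begin

definition J_mat :: "nat \<Rightarrow> complex mat" where
  "J_mat p = four_block_mat (0\<^sub>m p p) (1\<^sub>m p) (- 1\<^sub>m p) (0\<^sub>m p p)"

definition skew_symmetric :: "complex mat \<Rightarrow> bool" where
  "skew_symmetric A \<longleftrightarrow> transpose_mat A = - A"

definition skew_hamiltonian :: "nat \<Rightarrow> complex mat \<Rightarrow> bool" where
  "skew_hamiltonian p W \<longleftrightarrow> W \<in> carrier_mat (2*p) (2*p) \<and>
     J_mat p * W = transpose_mat W * J_mat p"

definition symplectic :: "nat \<Rightarrow> complex mat \<Rightarrow> bool" where
  "symplectic p M \<longleftrightarrow> M \<in> carrier_mat (2*p) (2*p) \<and>
     transpose_mat M * J_mat p * M = J_mat p"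

definition poly_mat_eval :: "nat \<Rightarrow> complex poly \<Rightarrow> complex mat \<Rightarrow> complex mat" where
  "poly_mat_eval m q P = foldr (\<lambda>c M. c \<cdot>\<^sub>m 1\<^sub>m m + P * M) (coeffs q) (0\<^sub>m m m)"

definition minimal_polynomial :: "nat \<Rightarrow> complex mat \<Rightarrow> complex poly \<Rightarrow> bool" where
  "minimal_polynomial m P q \<longleftrightarrow> lead_coeff q = 1 \<and> poly_mat_eval m q P = 0\<^sub>m m m \<and>
     (\<forall>r. r \<noteq> 0 \<longrightarrow> poly_mat_eval m r P = 0\<^sub>m m m \<longrightarrow> degree q \<le> degree r)"

definition regular_skew_ham :: "nat \<Rightarrow> complex mat \<Rightarrow> bool" where
  "regular_skew_ham p W \<longleftrightarrow> skew_hamiltonian p W \<and>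
     (\<exists>M Minv P q. symplectic p M \<and> P \<in> carrier_mat p p \<and>
        similar_mat_wit W (four_block_mat P (0\<^sub>m p p) (0\<^sub>m p p) (transpose_mat P)) M Minv \<and>
        minimal_polynomial p P q \<and> degree q = p)"

end

theory Submission
  imports Defs "HOL-Computational_Algebra.Polynomial_Factorial" "HOL-Computational_Algebra.Field_as_Ring"
    "Jordan_Normal_Form.DL_Rank"
begin

text \<open>A symplectic conjugation turns \<open>W = JB\<close> into \<open>diag(P, P\<^sup>T)\<close>, and since the minimal
  polynomial of \<open>P\<close> has degree \<open>p\<close>, both \<open>P\<close> and \<open>P\<^sup>T\<close> have cyclic vectors. A skew-Hamiltonian
  \<open>X\<close> commuting with \<open>diag(P, P\<^sup>T)\<close> has blocks \<open>[[X\<^sub>1, X\<^sub>2], [X\<^sub>3, X\<^sub>1\<^sup>T]]\<close> with \<open>X\<^sub>2, X\<^sub>3\<close>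
  skew-symmetric. As \<open>X\<^sub>1\<close> commutes with the cyclic \<open>P\<close>, \<open>X\<^sub>1 = f(P)\<close> with \<open>deg f < p\<close>. The relation
  \<open>P X\<^sub>2 = X\<^sub>2 P\<^sup>T\<close> forces \<open>X\<^sub>2 = 0\<close>: for a cyclic vector \<open>v\<close> of \<open>P\<^sup>T\<close>, the value of
  \<open>g(P\<^sup>T)v \<bullet> X\<^sub>2 h(P\<^sup>T)v\<close> depends only on the product \<open>gh\<close>, so this alternating form is also
  symmetric; likewise \<open>X\<^sub>3 = 0\<close>. Hence the skew-Hamiltonian commutant of \<open>W\<close> is
  \<open>{f(W) | deg f < p}\<close>, spanned by \<open>W\<^sup>0, \<dots>, W\<^sup>p\<^sup>-\<^sup>1\<close>, which are independent because no nonzero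
  polynomial of degree \<open>< p\<close> annihilates \<open>P\<close>. Finally, \<open>X = JA\<close> with \<open>A\<close> skew-symmetric exactly
  when \<open>X\<close> is skew-Hamiltonian.\<close>

section \<open>Matrix arithmetic\<close>

lemma smult_zero_one_mat[simp]: "(0::'a::comm_ring_1) \<cdot>\<^sub>m 1\<^sub>m m = 0\<^sub>m m m"
  by (rule eq_matI) auto

lemma one_smult_mat[simp]: "(1::'a::comm_ring_1) \<cdot>\<^sub>m A = A"
  by (rule eq_matI) auto

lemma smult_smult_mat[simp]: "(a::'a::comm_ring_1) \<cdot>\<^sub>m (b \<cdot>\<^sub>m A) = (a * b) \<cdot>\<^sub>m A"
  by (rule eq_matI) auto

lemma transpose_smult_one_mat[simp]: "transpose_mat (a \<cdot>\<^sub>m 1\<^sub>m m) = a \<cdot>\<^sub>m 1\<^sub>m m"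
  by (rule eq_matI) auto

lemma mult_smult_one_mat_right[simp]:
  assumes "(A :: 'a::comm_ring_1 mat) \<in> carrier_mat n m" shows "A * (a \<cdot>\<^sub>m 1\<^sub>m m) = a \<cdot>\<^sub>m A"
  using mult_smult_distrib[OF assms one_carrier_mat, of a] assms by simp

lemma mult_smult_one_mat_left[simp]:
  assumes "(A :: 'a::comm_ring_1 mat) \<in> carrier_mat n m" shows "(a \<cdot>\<^sub>m 1\<^sub>m n) * A = a \<cdot>\<^sub>m A"
  using mult_smult_assoc_mat[OF one_carrier_mat assms, of a] assms by simp

text \<open>Square instances of library rules whose side conditions mention a dimension that does not
  occur in the conclusion, which the simplifier cannot instantiate.\<close>
lemma mult_carrier_mat_square[simp]:
  "A \<in> carrier_mat m m \<Longrightarrow> B \<in> carrier_mat m m \<Longrightarrow> A * B \<in> carrier_mat m m"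
  by auto

lemma left_mult_one_mat_square[simp]: "(A :: 'a::semiring_1 mat) \<in> carrier_mat m m \<Longrightarrow> 1\<^sub>m m * A = A"
  by (rule left_mult_one_mat)

lemma right_mult_one_mat_square[simp]: "(A :: 'a::semiring_1 mat) \<in> carrier_mat m m \<Longrightarrow> A * 1\<^sub>m m = A"
  by (rule right_mult_one_mat)

lemma mult_mat_vec_zero_vec[simp]: "A \<in> carrier_mat n m \<Longrightarrow> A *\<^sub>v 0\<^sub>v m = (0\<^sub>v n :: 'a::semiring_0 vec)"
  by (intro eq_vecI) auto

lemma mult_zero_mat_vec[simp]: "v \<in> carrier_vec m \<Longrightarrow> 0\<^sub>m n m *\<^sub>v v = (0\<^sub>v n :: 'a::semiring_0 vec)"
  by (intro eq_vecI) (auto simp: scalar_prod_def)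

lemma ex_nonzero_mat_entry:
  assumes "A \<in> carrier_mat m m" and "A \<noteq> 0\<^sub>m m m"
  shows "\<exists>i j. i < m \<and> j < m \<and> A $$ (i,j) \<noteq> 0"
proof (rule ccontr)
  assume "\<not> ?thesis"
  then have "A = 0\<^sub>m m m" using assms(1) by (intro eq_matI) auto
  then show False using assms(2) by simp
qed

lemma mat_eq_by_mult_vec:
  assumes A: "(A :: complex mat) \<in> carrier_mat n m" and B: "B \<in> carrier_mat n m"
    and e: "\<And>x. x \<in> carrier_vec m \<Longrightarrow> A *\<^sub>v x = B *\<^sub>v x"
  shows "A = B"
proof (rule eq_matI)
  fix i j assume i: "i < dim_row B" and j: "j < dim_col B"
  have "(A *\<^sub>v unit_vec m j) $ i = (B *\<^sub>v unit_vec m j) $ i" using e[of "unit_vec m j"] by simp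
  then show "A $$ (i,j) = B $$ (i,j)" using A B i j by simp
qed (insert A B, auto)

lemma minus_eq_zero_mat_iff:
  assumes "(A :: 'a :: ab_group_add mat) \<in> carrier_mat n m" "B \<in> carrier_mat n m"
  shows "A - B = 0\<^sub>m n m \<longleftrightarrow> A = B"
proof
  assume "A - B = 0\<^sub>m n m"
  then have "A $$ (i,j) = B $$ (i,j)" if "i < n" "j < m" for i j
    using that assms by (metis index_minus_mat(1) index_zero_mat(1) carrier_matD right_minus_eq)
  then show "A = B" using assms by (intro eq_matI) auto
qed (use assms in simp)

lemma mult_conj_mat:
  assumes "(M :: 'a :: semiring_1 mat) \<in> carrier_mat n n" "Mi \<in> carrier_mat n n"
    "X \<in> carrier_mat n n" "Y \<in> carrier_mat n n" and "M * Mi = 1\<^sub>m n"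
  shows "(Mi * X * M) * (Mi * Y * M) = Mi * (X * Y) * M"
proof -
  have "(Mi * X * M) * (Mi * Y * M) = Mi * X * (M * Mi) * Y * M"
    using assms(1-4) by (simp add: assoc_mult_mat[of _ n n _ n _ n])
  also have "\<dots> = Mi * (X * Y) * M"
    using assms by (simp add: assoc_mult_mat[of _ n n _ n _ n])
  finally show ?thesis .
qed

lemma conj_conj_mat:
  assumes "(M :: 'a :: semiring_1 mat) \<in> carrier_mat n n" "Mi \<in> carrier_mat n n"
    "X \<in> carrier_mat n n" and "Mi * M = 1\<^sub>m n"
  shows "Mi * (M * X * Mi) * M = X"
proof -
  have "Mi * (M * X * Mi) * M = (Mi * M) * X * (Mi * M)"
    using assms(1-3) by (simp add: assoc_mult_mat[of _ n n _ n _ n])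
  also have "\<dots> = X" using assms by simp
  finally show ?thesis .
qed

lemma four_block_mat_eqD:
  assumes "A1 \<in> carrier_mat p p" "A2 \<in> carrier_mat p p" "A3 \<in> carrier_mat p p" "A4 \<in> carrier_mat p p"
    and "B1 \<in> carrier_mat p p" "B2 \<in> carrier_mat p p" "B3 \<in> carrier_mat p p" "B4 \<in> carrier_mat p p"
    and e: "four_block_mat A1 A2 A3 A4 = four_block_mat B1 B2 B3 B4"
  shows "A1 = B1 \<and> A2 = B2 \<and> A3 = B3 \<and> A4 = B4"
proof -
  have ix: "four_block_mat A1 A2 A3 A4 $$ (i,j) = four_block_mat B1 B2 B3 B4 $$ (i,j)" for i j
    using e by simp
  have "A1 = B1"
  proof (rule eq_matI)
    fix i j assume "i < dim_row B1" "j < dim_col B1"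
    then show "A1 $$ (i,j) = B1 $$ (i,j)" using ix[of i j] assms(1-8) by simp
  qed (use assms in auto)
  moreover have "A2 = B2"
  proof (rule eq_matI)
    fix i j assume "i < dim_row B2" "j < dim_col B2"
    then show "A2 $$ (i,j) = B2 $$ (i,j)" using ix[of i "j + p"] assms(1-8) by simp
  qed (use assms in auto)
  moreover have "A3 = B3"
  proof (rule eq_matI)
    fix i j assume "i < dim_row B3" "j < dim_col B3"
    then show "A3 $$ (i,j) = B3 $$ (i,j)" using ix[of "i + p" j] assms(1-8) by simp
  qed (use assms in auto)
  moreover have "A4 = B4"
  proof (rule eq_matI)
    fix i j assume "i < dim_row B4" "j < dim_col B4"
    then show "A4 $$ (i,j) = B4 $$ (i,j)" using ix[of "i + p" "j + p"] assms(1-8) by simp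
  qed (use assms in auto)
  ultimately show ?thesis by blast
qed

section \<open>Evaluating polynomials at matrices\<close>

lemma poly_mat_eval_carrier[simp]:
  assumes "Q \<in> carrier_mat m m" shows "poly_mat_eval m f Q \<in> carrier_mat m m"
proof -
  have "foldr (\<lambda>c M. c \<cdot>\<^sub>m 1\<^sub>m m + Q * M) cs (0\<^sub>m m m) \<in> carrier_mat m m" for cs
    using assms by (induct cs) auto
  then show ?thesis unfolding poly_mat_eval_def .
qed

lemma poly_mat_eval_dim[simp]:
  "Q \<in> carrier_mat m m \<Longrightarrow> dim_row (poly_mat_eval m f Q) = m"
  "Q \<in> carrier_mat m m \<Longrightarrow> dim_col (poly_mat_eval m f Q) = m"
  by (metis carrier_matD poly_mat_eval_carrier)+

lemma poly_mat_eval_0[simp]: "poly_mat_eval m 0 Q = 0\<^sub>m m m"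
  unfolding poly_mat_eval_def by simp

lemma poly_mat_eval_pCons:
  assumes Q: "Q \<in> carrier_mat m m"
  shows "poly_mat_eval m (pCons c f) Q = c \<cdot>\<^sub>m 1\<^sub>m m + Q * poly_mat_eval m f Q"
proof (cases "f = 0 \<and> c = 0")
  case True
  then show ?thesis using Q by auto
next
  case False
  then have "coeffs (pCons c f) = c # coeffs f"
    by (auto simp: coeffs_pCons_eq_cCons cCons_def)
  then show ?thesis unfolding poly_mat_eval_def by simp
qed

lemma poly_mat_eval_pCons_0:
  assumes "Q \<in> carrier_mat m m"
  shows "poly_mat_eval m (pCons 0 f) Q = Q * poly_mat_eval m f Q"
  using assms by (simp add: poly_mat_eval_pCons left_add_zero_mat[of _ m m])

lemma poly_mat_eval_add:
  assumes Q: "Q \<in> carrier_mat m m"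
  shows "poly_mat_eval m (f + g) Q = poly_mat_eval m f Q + poly_mat_eval m g Q"
proof (induct f g rule: poly_induct2)
  case 0
  then show ?case using Q by simp
next
  case (pCons a f b g)
  have F: "poly_mat_eval m f Q \<in> carrier_mat m m" and G: "poly_mat_eval m g Q \<in> carrier_mat m m"
    using Q by auto
  have "poly_mat_eval m (pCons (a + b) (f + g)) Q
      = (a + b) \<cdot>\<^sub>m 1\<^sub>m m + (Q * poly_mat_eval m f Q + Q * poly_mat_eval m g Q)"
    using pCons by (simp add: poly_mat_eval_pCons[OF Q] mult_add_distrib_mat[OF Q F G])
  also have "\<dots> = poly_mat_eval m (pCons a f) Q + poly_mat_eval m (pCons b g) Q"
    using Q by (simp add: poly_mat_eval_pCons, intro eq_matI, auto simp: algebra_simps)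
  finally show ?case by simp
qed

lemma poly_mat_eval_smult:
  assumes Q: "Q \<in> carrier_mat m m"
  shows "poly_mat_eval m (Polynomial.smult c f) Q = c \<cdot>\<^sub>m poly_mat_eval m f Q"
proof (induct f)
  case (pCons a f)
  have F: "poly_mat_eval m f Q \<in> carrier_mat m m" using Q by simp
  show ?case
    using Q pCons
    by (simp add: poly_mat_eval_pCons mult_smult_distrib[OF Q F] add_smult_distrib_left_mat[of _ m m])
qed simp

lemma poly_mat_eval_mult:
  assumes Q: "Q \<in> carrier_mat m m"
  shows "poly_mat_eval m (f * g) Q = poly_mat_eval m f Q * poly_mat_eval m g Q"
proof (induct f)
  case 0
  then show ?case using Q by (simp add: left_mult_zero_mat[of _ m m])
next
  case (pCons a f)
  have F: "poly_mat_eval m f Q \<in> carrier_mat m m" and G: "poly_mat_eval m g Q \<in> carrier_mat m m"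
    using Q by auto
  have "poly_mat_eval m (pCons a f * g) Q
      = poly_mat_eval m (Polynomial.smult a g + pCons 0 (f * g)) Q" by simp
  also have "\<dots> = (a \<cdot>\<^sub>m 1\<^sub>m m) * poly_mat_eval m g Q + (Q * poly_mat_eval m f Q) * poly_mat_eval m g Q"
    using Q G pCons
    by (simp add: poly_mat_eval_add poly_mat_eval_smult poly_mat_eval_pCons_0 assoc_mult_mat[OF Q F G]
        mult_smult_one_mat_left[OF G])
  also have "\<dots> = poly_mat_eval m (pCons a f) Q * poly_mat_eval m g Q"
    using Q F G by (simp add: poly_mat_eval_pCons add_mult_distrib_mat[of _ m m _ _ m]
        mult_smult_one_mat_left[OF G])
  finally show ?case .
qed

lemma poly_mat_eval_const[simp]:
  assumes "Q \<in> carrier_mat m m" shows "poly_mat_eval m [:c:] Q = c \<cdot>\<^sub>m 1\<^sub>m m"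
  using assms by (simp add: poly_mat_eval_pCons)

lemma poly_mat_eval_monom:
  assumes Q: "Q \<in> carrier_mat m m"
  shows "poly_mat_eval m (monom c k) Q = c \<cdot>\<^sub>m Q ^\<^sub>m k"
proof -
  have pow: "Q * Q ^\<^sub>m k = Q ^\<^sub>m k * Q" for k
    using Q by (induct k) (simp_all add: assoc_mult_mat[OF Q pow_carrier_mat[OF Q] Q, symmetric])
  have "poly_mat_eval m ([:0, 1:] ^ k) Q = Q ^\<^sub>m k"
    using Q by (induct k) (simp_all add: one_pCons poly_mat_eval_pCons_0 pow)
  then show ?thesis using Q by (simp add: monom_altdef poly_mat_eval_smult)
qed

lemma poly_mat_eval_intertwine:
  assumes A: "A \<in> carrier_mat m m" and B: "B \<in> carrier_mat m m"
    and Y: "Y \<in> carrier_mat m m" and YB: "Y * B = A * Y"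
  shows "Y * poly_mat_eval m f B = poly_mat_eval m f A * Y"
proof (induct f)
  case 0
  then show ?case using A B Y by simp
next
  case (pCons a f)
  have FB: "poly_mat_eval m f B \<in> carrier_mat m m" and FA: "poly_mat_eval m f A \<in> carrier_mat m m"
    using A B by auto
  have one: "a \<cdot>\<^sub>m 1\<^sub>m m \<in> carrier_mat m m" by simp
  have "Y * poly_mat_eval m (pCons a f) B = a \<cdot>\<^sub>m Y + Y * (B * poly_mat_eval m f B)"
    using Y by (simp add: poly_mat_eval_pCons[OF B] mult_add_distrib_mat[OF Y one mult_carrier_mat_square[OF B FB]])
  also have "Y * (B * poly_mat_eval m f B) = A * (poly_mat_eval m f A * Y)"
    using YB pCons by (simp add: assoc_mult_mat[OF Y B FB, symmetric] assoc_mult_mat[OF A Y FB])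
  also have "a \<cdot>\<^sub>m Y + A * (poly_mat_eval m f A * Y) = poly_mat_eval m (pCons a f) A * Y"
    using Y by (simp add: poly_mat_eval_pCons[OF A] add_mult_distrib_mat[OF one mult_carrier_mat_square[OF A FA] Y]
        assoc_mult_mat[OF A FA Y])
  finally show ?case .
qed

lemma poly_mat_eval_commute:
  assumes "Q \<in> carrier_mat m m"
  shows "poly_mat_eval m f Q * poly_mat_eval m g Q = poly_mat_eval m g Q * poly_mat_eval m f Q"
  using poly_mat_eval_mult[OF assms, of f g] poly_mat_eval_mult[OF assms, of g f]
  by (simp add: mult.commute)

lemma poly_mat_eval_transpose:
  assumes Q: "Q \<in> carrier_mat m m"
  shows "poly_mat_eval m f (transpose_mat Q) = transpose_mat (poly_mat_eval m f Q)"
proof (induct f)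
  case (pCons a f)
  have F: "poly_mat_eval m f Q \<in> carrier_mat m m" using Q by simp
  have "poly_mat_eval m (pCons a f) (transpose_mat Q) = a \<cdot>\<^sub>m 1\<^sub>m m + transpose_mat (poly_mat_eval m f Q * Q)"
    using Q F pCons by (simp add: poly_mat_eval_pCons transpose_mult[OF F Q])
  also have "poly_mat_eval m f Q * Q = Q * poly_mat_eval m f Q"
    by (rule poly_mat_eval_intertwine[OF Q Q Q refl, symmetric])
  finally show ?case
    using Q F by (simp add: poly_mat_eval_pCons transpose_add[OF _ mult_carrier_mat_square[OF Q F]])
qed simp

lemma poly_mat_eval_similar:
  assumes M: "M \<in> carrier_mat m m" and Mi: "Mi \<in> carrier_mat m m" and D: "D \<in> carrier_mat m m"
    and inv: "M * Mi = 1\<^sub>m m" "Mi * M = 1\<^sub>m m"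
  shows "poly_mat_eval m f (M * D * Mi) = M * poly_mat_eval m f D * Mi"
proof -
  let ?A = "M * D * Mi"
  have A: "?A \<in> carrier_mat m m" using M Mi D by simp
  have "M * D = ?A * M"
    using M Mi D inv by (simp add: assoc_mult_mat[of _ m m _ m _ m])
  then have "M * poly_mat_eval m f D = poly_mat_eval m f ?A * M"
    by (rule poly_mat_eval_intertwine[OF A D M])
  then have "M * poly_mat_eval m f D * Mi = poly_mat_eval m f ?A * (M * Mi)"
    using A M Mi by (simp add: assoc_mult_mat[of _ m m _ m _ m])
  then show ?thesis using A inv by simp
qed

lemma poly_mat_eval_four_block_diag:
  assumes A: "A \<in> carrier_mat p p" and B: "B \<in> carrier_mat p p"
  shows "poly_mat_eval (p + p) f (four_block_mat A (0\<^sub>m p p) (0\<^sub>m p p) B) =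
    four_block_mat (poly_mat_eval p f A) (0\<^sub>m p p) (0\<^sub>m p p) (poly_mat_eval p f B)"
proof (induct f)
  case (pCons c f)
  have FA: "poly_mat_eval p f A \<in> carrier_mat p p" and FB: "poly_mat_eval p f B \<in> carrier_mat p p"
    using A B by auto
  have "four_block_mat A (0\<^sub>m p p) (0\<^sub>m p p) B *
          four_block_mat (poly_mat_eval p f A) (0\<^sub>m p p) (0\<^sub>m p p) (poly_mat_eval p f B) =
        four_block_mat (A * poly_mat_eval p f A) (0\<^sub>m p p) (0\<^sub>m p p) (B * poly_mat_eval p f B)"
    using A B FA FB by (subst mult_four_block_mat[OF A _ _ B FA _ _ FB]) auto
  moreover have "c \<cdot>\<^sub>m four_block_mat (1\<^sub>m p) (0\<^sub>m p p) (0\<^sub>m p p) (1\<^sub>m p) +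
      four_block_mat (A * poly_mat_eval p f A) (0\<^sub>m p p) (0\<^sub>m p p) (B * poly_mat_eval p f B) =
      four_block_mat (c \<cdot>\<^sub>m 1\<^sub>m p + A * poly_mat_eval p f A) (0\<^sub>m p p) (0\<^sub>m p p)
        (c \<cdot>\<^sub>m 1\<^sub>m p + B * poly_mat_eval p f B)"
    by (subst smult_four_block_mat, auto, subst add_four_block_mat, insert A B FA FB, auto)
  ultimately show ?case
    using A B pCons by (simp add: poly_mat_eval_pCons flip: four_block_one_mat)
qed simp

lemma poly_eq_sum_monom_below:
  assumes "\<forall>k\<ge>N. coeff f k = 0"
  shows "f = (\<Sum>k<N. monom (coeff f k) k)"
  using assms by (intro poly_eqI) (auto simp: coeff_sum coeff_monom)

lemma coeff_sum_monom_below: "coeff (\<Sum>k<N. monom (c k) k) j = (if j < N then c j else 0)"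
  by (simp add: coeff_sum coeff_monom)

lemma poly_mat_eval_index:
  assumes Q: "Q \<in> carrier_mat m m" and i: "i < m" and j: "j < m"
    and f: "\<forall>k\<ge>N. coeff f k = 0"
  shows "poly_mat_eval m f Q $$ (i,j) = (\<Sum>k<N. coeff f k * (Q ^\<^sub>m k) $$ (i,j))"
proof -
  have "poly_mat_eval m (sum g K) Q $$ (i,j) = (\<Sum>k\<in>K. poly_mat_eval m (g k) Q $$ (i,j))"
    for g and K :: "nat set"
    using Q i j by (induct K rule: infinite_finite_induct) (auto simp: poly_mat_eval_add)
  moreover have "poly_mat_eval m f Q = poly_mat_eval m (\<Sum>k<N. monom (coeff f k) k) Q"
    using poly_eq_sum_monom_below[OF f] by simp
  ultimately show ?thesis using Q i j by (simp add: poly_mat_eval_monom)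
qed

section \<open>Cyclic vectors\<close>

text \<open>Linear independence of \<open>v, Qv, \<dots>, Q\<^sup>m\<^sup>-\<^sup>1v\<close>, phrased with polynomials of degree \<open>< m\<close>.\<close>
definition cyclic_vector :: "nat \<Rightarrow> complex mat \<Rightarrow> complex vec \<Rightarrow> bool" where
  "cyclic_vector m Q v \<longleftrightarrow> v \<in> carrier_vec m \<and>
     (\<forall>r. (\<forall>k\<ge>m. coeff r k = 0) \<longrightarrow> poly_mat_eval m r Q *\<^sub>v v = 0\<^sub>v m \<longrightarrow> r = 0)"

text \<open>The vectors \<open>(1, t, \<dots>, t\<^sup>m\<^sup>-\<^sup>1)\<close> lie in the kernel of a nonzero matrix only for the finitely
  many roots \<open>t\<close> of a nonzero polynomial.\<close>
lemma ex_vec_not_in_kernels: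
  assumes F: "finite F" and FA: "\<And>A. A \<in> F \<Longrightarrow> A \<in> carrier_mat m m \<and> A \<noteq> 0\<^sub>m m m"
  shows "\<exists>v \<in> carrier_vec m. \<forall>A\<in>F. A *\<^sub>v v \<noteq> (0\<^sub>v m :: complex vec)"
proof -
  define vt where "vt = (\<lambda>t::complex. vec m (\<lambda>l. t ^ l))"
  define Z where "Z = (\<lambda>A. {t. A *\<^sub>v vt t = 0\<^sub>v m})"
  have "finite (Z A)" if AF: "A \<in> F" for A
  proof -
    have A: "A \<in> carrier_mat m m" and A0: "A \<noteq> 0\<^sub>m m m" using FA[OF AF] by auto
    obtain i j where i: "i < m" and j: "j < m" and Aij: "A $$ (i,j) \<noteq> 0"
      using ex_nonzero_mat_entry[OF A A0] by blast
    define pA where "pA = (\<Sum>l<m. monom (A $$ (i,l)) l)"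
    have "coeff pA j \<noteq> 0" unfolding pA_def using j Aij by (simp add: coeff_sum_monom_below)
    then have pA0: "pA \<noteq> 0" by auto
    have "(A *\<^sub>v vt t) $ i = poly pA t" for t
      using A i unfolding vt_def pA_def
      by (simp add: poly_sum poly_monom scalar_prod_def row_def atLeast0LessThan)
    moreover have "(A *\<^sub>v vt t) $ i = 0" if "t \<in> Z A" for t using that i unfolding Z_def by simp
    ultimately have "Z A \<subseteq> {t. poly pA t = 0}" by auto
    then show ?thesis using poly_roots_finite[OF pA0] finite_subset by blast
  qed
  then have "finite (\<Union>A\<in>F. Z A)" using F by blast
  then obtain t where "t \<notin> (\<Union>A\<in>F. Z A)"
    using ex_new_if_finite[OF infinite_UNIV_char_0] by blast
  then show ?thesis by (intro bexI[of _ "vt t"]) (auto simp: Z_def vt_def)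
qed

lemma finite_normalized_divisors:
  assumes q: "(q :: complex poly) \<noteq> 0"
  shows "finite {g. g dvd q \<and> normalize g = g}"
proof -
  let ?G = "{g. g dvd q \<and> normalize g = g}"
  let ?N = "prime_factorization q"
  have "inj_on prime_factorization ?G"
  proof (rule inj_onI)
    fix x y assume x: "x \<in> ?G" and y: "y \<in> ?G" and e: "prime_factorization x = prime_factorization y"
    have "x \<noteq> 0" "y \<noteq> 0" using x y q by auto
    then show "x = y" using prod_mset_prime_factorization[of x] prod_mset_prime_factorization[of y] x y e
      by auto
  qed
  moreover have "prime_factorization ` ?G \<subseteq> (\<Union>k\<in>{..size ?N}. multisets_of_size (set_mset ?N) k)"
  proof
    fix M assume "M \<in> prime_factorization ` ?G"
    then obtain g where g: "g \<in> ?G" and M: "M = prime_factorization g" by blast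
    have "g \<noteq> 0" using g q by auto
    then have "M \<subseteq># ?N" using g q M prime_factorization_subset_iff_dvd by auto
    then show "M \<in> (\<Union>k\<in>{..size ?N}. multisets_of_size (set_mset ?N) k)"
      by (auto simp: multisets_of_size_def intro!: set_mset_mono size_mset_mono)
  qed
  then have "finite (prime_factorization ` ?G)" by (rule finite_subset) auto
  ultimately show ?thesis using finite_imageD by blast
qed

text \<open>A vector avoiding the kernels of \<open>g(Q)\<close> for the finitely many monic divisors \<open>g\<close> of the
  minimal polynomial of degree \<open>< m\<close> is cyclic: if \<open>r(Q)v = 0\<close>, then also \<open>gcd(r, q)(Q)v = 0\<close>.\<close>
lemma cyclic_vector_exists:
  assumes Q: "Q \<in> carrier_mat m m" and mp: "minimal_polynomial m Q q" and dq: "degree q = m"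
  shows "\<exists>v. cyclic_vector m Q v"
proof -
  have q0: "q \<noteq> 0" and qQ: "poly_mat_eval m q Q = 0\<^sub>m m m"
    and minimal: "\<And>r. r \<noteq> 0 \<Longrightarrow> poly_mat_eval m r Q = 0\<^sub>m m m \<Longrightarrow> m \<le> degree r"
    using mp dq unfolding minimal_polynomial_def by auto
  define G where "G = {g. g dvd q \<and> normalize g = g \<and> degree g < m}"
  have "finite G" unfolding G_def
    by (rule finite_subset[OF _ finite_normalized_divisors[OF q0]]) auto
  moreover have "poly_mat_eval m g Q \<in> carrier_mat m m \<and> poly_mat_eval m g Q \<noteq> 0\<^sub>m m m" if "g \<in> G" for g
    using that q0 minimal[of g] Q unfolding G_def by auto
  ultimately have "\<exists>v \<in> carrier_vec m. \<forall>A\<in>(\<lambda>g. poly_mat_eval m g Q) ` G. A *\<^sub>v v \<noteq> 0\<^sub>v m"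
    by (intro ex_vec_not_in_kernels) auto
  then obtain v where v: "v \<in> carrier_vec m"
    and vG: "\<And>g. g \<in> G \<Longrightarrow> poly_mat_eval m g Q *\<^sub>v v \<noteq> 0\<^sub>v m"
    by blast
  have "r = 0" if low: "\<forall>k\<ge>m. coeff r k = 0" and rv: "poly_mat_eval m r Q *\<^sub>v v = 0\<^sub>v m" for r
  proof (rule ccontr)
    assume r0: "r \<noteq> 0"
    then have "degree r < m" using low by (meson leading_coeff_0_iff not_le)
    then have gG: "gcd r q \<in> G" unfolding G_def using r0 dvd_imp_degree_le[of "gcd r q" r] by auto
    obtain x y where xy: "bezout_coefficients r q = (x, y)" by (cases "bezout_coefficients r q")
    have "gcd r q = x * r + y * q" using bezout_coefficients[OF xy] by simp
    then have "poly_mat_eval m (gcd r q) Q *\<^sub>v v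
        = poly_mat_eval m x Q *\<^sub>v (poly_mat_eval m r Q *\<^sub>v v) + poly_mat_eval m y Q *\<^sub>v (poly_mat_eval m q Q *\<^sub>v v)"
      using Q v by (simp add: poly_mat_eval_add poly_mat_eval_mult add_mult_distrib_mat_vec[of _ m m]
          assoc_mult_mat_vec[of _ m m _ m])
    also have "\<dots> = 0\<^sub>v m"
      using rv qQ Q v by (simp add: mult_mat_vec_zero_vec[OF poly_mat_eval_carrier[OF Q]])
    finally show False using vG[OF gG] by simp
  qed
  then show ?thesis using v unfolding cyclic_vector_def by blast
qed

text \<open>The Krylov matrix \<open>[v, Qv, \<dots>, Q\<^sup>m\<^sup>-\<^sup>1v]\<close> has trivial kernel, hence is invertible.\<close>
lemma cyclic_vector_spans:
  assumes Q: "Q \<in> carrier_mat m m" and cyc: "cyclic_vector m Q v" and x: "x \<in> carrier_vec m"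
  shows "\<exists>r. (\<forall>k\<ge>m. coeff r k = 0) \<and> x = poly_mat_eval m r Q *\<^sub>v v"
proof -
  have v: "v \<in> carrier_vec m"
    and indep: "\<And>r. (\<forall>k\<ge>m. coeff r k = 0) \<Longrightarrow> poly_mat_eval m r Q *\<^sub>v v = 0\<^sub>v m \<Longrightarrow> r = 0"
    using cyc unfolding cyclic_vector_def by auto
  define K where "K = mat m m (\<lambda>(i,k). (Q ^\<^sub>m k *\<^sub>v v) $ i)"
  define rc where "rc = (\<lambda>c::complex vec. \<Sum>k<m. monom (c $ k) k)"
  have coeff_rc: "coeff (rc c) k = (if k < m then c $ k else 0)" for c k
    unfolding rc_def by (rule coeff_sum_monom_below)
  then have low: "\<forall>k\<ge>m. coeff (rc c) k = 0" for c by simp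
  have K: "K \<in> carrier_mat m m" unfolding K_def by simp
  have Kc: "K *\<^sub>v c = poly_mat_eval m (rc c) Q *\<^sub>v v" if c: "c \<in> carrier_vec m" for c
  proof (rule eq_vecI)
    fix i assume "i < dim_vec (poly_mat_eval m (rc c) Q *\<^sub>v v)"
    then have i: "i < m" using Q by simp
    have "(K *\<^sub>v c) $ i = (\<Sum>k<m. (\<Sum>j<m. (Q ^\<^sub>m k) $$ (i,j) * v $ j) * c $ k)"
      using i c v Q unfolding K_def by (simp add: scalar_prod_def atLeast0LessThan)
    also have "\<dots> = (\<Sum>k<m. \<Sum>j<m. c $ k * (Q ^\<^sub>m k) $$ (i,j) * v $ j)"
      by (simp add: sum_distrib_right sum_distrib_left mult_ac)
    also have "\<dots> = (\<Sum>j<m. \<Sum>k<m. c $ k * (Q ^\<^sub>m k) $$ (i,j) * v $ j)"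
      by (rule sum.swap)
    also have "\<dots> = (\<Sum>j<m. poly_mat_eval m (rc c) Q $$ (i,j) * v $ j)"
      by (rule sum.cong, simp, subst poly_mat_eval_index[OF Q i _ low], simp,
          simp add: coeff_rc sum_distrib_right)
    also have "\<dots> = (poly_mat_eval m (rc c) Q *\<^sub>v v) $ i"
      using i v Q by (simp add: scalar_prod_def atLeast0LessThan)
    finally show "(K *\<^sub>v c) $ i = (poly_mat_eval m (rc c) Q *\<^sub>v v) $ i" .
  qed (insert K Q, simp)
  have "det K \<noteq> 0"
  proof
    assume "det K = 0"
    then obtain c where c: "c \<in> carrier_vec m" "c \<noteq> 0\<^sub>v m" "K *\<^sub>v c = 0\<^sub>v m"
      using det_0_iff_vec_prod_zero[OF K] by blast
    then have "rc c = 0" using indep[OF low] Kc by simp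
    then have "c = 0\<^sub>v m"
      by (intro eq_vecI, insert c(1), auto, metis coeff_rc coeff_0)
    then show False using c by simp
  qed
  from det_non_zero_imp_unit[OF K this] obtain Ki where Ki: "Ki \<in> carrier_mat m m" "K * Ki = 1\<^sub>m m"
    unfolding Units_def by (auto simp: ring_mat_simps)
  have "x = K *\<^sub>v (Ki *\<^sub>v x)" using assoc_mult_mat_vec[OF K Ki(1) x] Ki x by simp
  then show ?thesis using Kc[of "Ki *\<^sub>v x"] Ki x low by auto
qed

lemma commutant_cyclic_eq_poly_mat_eval:
  assumes Q: "Q \<in> carrier_mat m m" and cyc: "cyclic_vector m Q v"
    and X: "X \<in> carrier_mat m m" and XQ: "X * Q = Q * X"
  shows "\<exists>f. (\<forall>k\<ge>m. coeff f k = 0) \<and> X = poly_mat_eval m f Q"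
proof -
  have v: "v \<in> carrier_vec m" using cyc unfolding cyclic_vector_def by auto
  obtain f where f: "\<forall>k\<ge>m. coeff f k = 0" and Xv: "X *\<^sub>v v = poly_mat_eval m f Q *\<^sub>v v"
    using cyclic_vector_spans[OF Q cyc, of "X *\<^sub>v v"] X v by auto
  have "X *\<^sub>v x = poly_mat_eval m f Q *\<^sub>v x" if x: "x \<in> carrier_vec m" for x
  proof -
    obtain g where x_eq: "x = poly_mat_eval m g Q *\<^sub>v v"
      using cyclic_vector_spans[OF Q cyc x] by auto
    have G: "poly_mat_eval m g Q \<in> carrier_mat m m" and F: "poly_mat_eval m f Q \<in> carrier_mat m m"
      using Q by auto
    have "X *\<^sub>v x = (X * poly_mat_eval m g Q) *\<^sub>v v"
      using assoc_mult_mat_vec[OF X G v] x_eq by simp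
    also have "\<dots> = (poly_mat_eval m g Q * X) *\<^sub>v v"
      using poly_mat_eval_intertwine[OF Q Q X XQ] by simp
    also have "\<dots> = poly_mat_eval m g Q *\<^sub>v (poly_mat_eval m f Q *\<^sub>v v)"
      using assoc_mult_mat_vec[OF G X v] Xv by simp
    also have "\<dots> = (poly_mat_eval m f Q * poly_mat_eval m g Q) *\<^sub>v v"
      using poly_mat_eval_commute[OF Q, of g f] assoc_mult_mat_vec[OF G F v] by simp
    also have "\<dots> = poly_mat_eval m f Q *\<^sub>v x" using x_eq assoc_mult_mat_vec[OF F G v] by simp
    finally show ?thesis .
  qed
  then have "X = poly_mat_eval m f Q" using mat_eq_by_mult_vec[OF X poly_mat_eval_carrier[OF Q]] by blast
  then show ?thesis using f by blast
qed

lemma cyclic_intertwiner_skew_eq_zero: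
  assumes Q: "Q \<in> carrier_mat m m" and Y: "Y \<in> carrier_mat m m"
    and QY: "Q * Y = Y * transpose_mat Q" and skew: "transpose_mat Y = - Y"
    and cyc: "cyclic_vector m (transpose_mat Q) v"
  shows "Y = 0\<^sub>m m m"
proof -
  let ?T = "transpose_mat Q"
  let ?e = "\<lambda>g. poly_mat_eval m g ?T *\<^sub>v v"
  have T: "?T \<in> carrier_mat m m" using Q by simp
  have v: "v \<in> carrier_vec m" using cyc unfolding cyclic_vector_def by auto
  have e: "?e g \<in> carrier_vec m" for g using mult_mat_vec_carrier[OF poly_mat_eval_carrier[OF T] v] .
  have sym: "?e g \<bullet> (Y *\<^sub>v ?e h) = ?e (h * g) \<bullet> (Y *\<^sub>v v)" for g h
  proof -
    have H: "poly_mat_eval m h Q \<in> carrier_mat m m" and G: "poly_mat_eval m g ?T \<in> carrier_mat m m"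
      and H': "poly_mat_eval m h ?T \<in> carrier_mat m m" using Q T by auto
    have "Y *\<^sub>v ?e h = poly_mat_eval m h Q *\<^sub>v (Y *\<^sub>v v)"
      using poly_mat_eval_intertwine[OF Q T Y QY[symmetric], of h]
      by (simp add: assoc_mult_mat_vec[OF Y H' v, symmetric] assoc_mult_mat_vec[OF H Y v])
    then have "?e g \<bullet> (Y *\<^sub>v ?e h) = (poly_mat_eval m h ?T *\<^sub>v ?e g) \<bullet> (Y *\<^sub>v v)"
      using transpose_vec_mult_scalar[OF H mult_mat_vec_carrier[OF Y v] e[of g]] Y v poly_mat_eval_transpose[OF Q, of h]
      by simp
    then show ?thesis
      using poly_mat_eval_mult[OF T, of h g] by (simp add: assoc_mult_mat_vec[OF H' G v])
  qed
  have alt: "x \<bullet> (Y *\<^sub>v w) = - (w \<bullet> (Y *\<^sub>v x))" if x: "x \<in> carrier_vec m" and w: "w \<in> carrier_vec m" for x w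
    using transpose_vec_mult_scalar[OF Y x w] skew Y x w
    by (simp add: comm_scalar_prod[of _ m] uminus_scalar_prod[of _ m, symmetric], metis minus_minus)
  show ?thesis
  proof (rule eq_matI)
    fix i j assume "i < dim_row (0\<^sub>m m m :: complex mat)" "j < dim_col (0\<^sub>m m m :: complex mat)"
    then have i: "i < m" and j: "j < m" by auto
    obtain g h where g: "unit_vec m i = ?e g" and h: "unit_vec m j = ?e h"
      using cyclic_vector_spans[OF T cyc] unit_vec_carrier by metis
    have "?e g \<bullet> (Y *\<^sub>v ?e h) = 0"
      using alt[OF e[of g] e[of h]] sym[of g h] sym[of h g] by (simp add: mult.commute)
    then show "Y $$ (i,j) = 0\<^sub>m m m $$ (i,j)" using Y i j by (simp flip: g h)
  qed (insert Y, auto)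
qed

lemma minimal_polynomial_transpose:
  assumes P: "P \<in> carrier_mat m m" and mp: "minimal_polynomial m P q"
  shows "minimal_polynomial m (transpose_mat P) q"
proof -
  have "poly_mat_eval m r (transpose_mat P) = 0\<^sub>m m m \<longleftrightarrow> poly_mat_eval m r P = 0\<^sub>m m m" for r
    using poly_mat_eval_transpose[OF P, of r] transpose_mat_eq[of _ "0\<^sub>m m m"] by auto
  then show ?thesis using mp unfolding minimal_polynomial_def by simp
qed

section \<open>Skew-Hamiltonian matrices\<close>

lemma J_mat_carrier[simp]: "J_mat p \<in> carrier_mat (2*p) (2*p)"
  unfolding J_mat_def by (simp add: mult_2)

lemma J_mat_dim[simp]: "dim_row (J_mat p) = 2*p" "dim_col (J_mat p) = 2*p"
  using J_mat_carrier carrier_matD by blast+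

lemma J_mat_mult_J_mat: "J_mat p * J_mat p = - 1\<^sub>m (2*p)"
proof -
  have "J_mat p * J_mat p = four_block_mat (- 1\<^sub>m p) (0\<^sub>m p p) (0\<^sub>m p p) (- 1\<^sub>m p)"
    unfolding J_mat_def by (subst mult_four_block_mat) auto
  also have "\<dots> = - 1\<^sub>m (2*p)" by (rule eq_matI) (auto simp: mult_2)
  finally show ?thesis .
qed

lemma transpose_J_mat: "transpose_mat (J_mat p) = - J_mat p"
  unfolding J_mat_def by (subst transpose_four_block_mat) (auto intro!: eq_matI)

lemma skew_hamiltonian_iff_J_mult_skew:
  assumes X: "X \<in> carrier_mat (2*p) (2*p)"
  shows "skew_hamiltonian p X \<longleftrightarrow>
    (\<exists>A. A \<in> carrier_mat (2*p) (2*p) \<and> skew_symmetric A \<and> X = J_mat p * A)"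
proof
  let ?J = "J_mat p"
  assume "skew_hamiltonian p X"
  then have JX: "?J * X = transpose_mat X * ?J" unfolding skew_hamiltonian_def by simp
  define A where "A = - (?J * X)"
  have "transpose_mat A = transpose_mat X * ?J"
    unfolding A_def using X by (simp add: transpose_uminus transpose_mult[of _ "2*p" "2*p" _ "2*p"] transpose_J_mat)
  then have "skew_symmetric A" unfolding skew_symmetric_def A_def JX by simp
  moreover have "?J * A = X"
    unfolding A_def using X by (simp add: assoc_mult_mat[of _ "2*p" "2*p" _ "2*p" _ "2*p", symmetric]
        J_mat_mult_J_mat)
  moreover have "A \<in> carrier_mat (2*p) (2*p)" unfolding A_def using X by simp
  ultimately show "\<exists>A. A \<in> carrier_mat (2*p) (2*p) \<and> skew_symmetric A \<and> X = ?J * A"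
    by auto
next
  let ?J = "J_mat p"
  assume "\<exists>A. A \<in> carrier_mat (2*p) (2*p) \<and> skew_symmetric A \<and> X = ?J * A"
  then obtain A where A: "A \<in> carrier_mat (2*p) (2*p)" and skew: "transpose_mat A = - A"
    and XA: "X = ?J * A" unfolding skew_symmetric_def by blast
  have "?J * X = - A"
    unfolding XA using A by (simp add: assoc_mult_mat[of _ "2*p" "2*p" _ "2*p" _ "2*p", symmetric]
        J_mat_mult_J_mat)
  moreover have "transpose_mat X * ?J = - A"
    unfolding XA using A skew
    by (simp add: transpose_mult[of _ "2*p" "2*p" _ "2*p"] transpose_J_mat J_mat_mult_J_mat
        assoc_mult_mat[of _ "2*p" "2*p" _ "2*p" _ "2*p"])
  ultimately show "skew_hamiltonian p X" unfolding skew_hamiltonian_def using X by simp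
qed

lemma skew_hamiltonian_poly_mat_eval:
  assumes "skew_hamiltonian p W"
  shows "skew_hamiltonian p (poly_mat_eval (2*p) f W)"
proof -
  have W: "W \<in> carrier_mat (2*p) (2*p)" and JW: "J_mat p * W = transpose_mat W * J_mat p"
    using assms unfolding skew_hamiltonian_def by auto
  have "J_mat p * poly_mat_eval (2*p) f W = poly_mat_eval (2*p) f (transpose_mat W) * J_mat p"
    by (rule poly_mat_eval_intertwine[OF _ W J_mat_carrier JW]) (use W in simp)
  then show ?thesis unfolding skew_hamiltonian_def using W by (simp add: poly_mat_eval_transpose)
qed

lemma J_mult_skew_commutant_eq:
  assumes W: "W \<in> carrier_mat (2*p) (2*p)"
  shows "{J_mat p * A | A. A \<in> carrier_mat (2*p) (2*p) \<and> skew_symmetric A \<and>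
            (J_mat p * A) * W - W * (J_mat p * A) = 0\<^sub>m (2*p) (2*p)}
    = {X \<in> carrier_mat (2*p) (2*p). skew_hamiltonian p X \<and> X * W = W * X}"
proof (intro equalityI subsetI)
  fix X assume "X \<in> {J_mat p * A | A. A \<in> carrier_mat (2*p) (2*p) \<and> skew_symmetric A \<and>
            (J_mat p * A) * W - W * (J_mat p * A) = 0\<^sub>m (2*p) (2*p)}"
  then obtain A where A: "A \<in> carrier_mat (2*p) (2*p)" "skew_symmetric A" and XA: "X = J_mat p * A"
    and comm: "X * W - W * X = 0\<^sub>m (2*p) (2*p)" by blast
  have X: "X \<in> carrier_mat (2*p) (2*p)" using A XA by simp
  have "skew_hamiltonian p X" using skew_hamiltonian_iff_J_mult_skew[OF X] A XA by blast
  moreover have "X * W = W * X"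
    using comm minus_eq_zero_mat_iff[OF mult_carrier_mat_square[OF X W] mult_carrier_mat_square[OF W X]]
    by simp
  ultimately show "X \<in> {X \<in> carrier_mat (2*p) (2*p). skew_hamiltonian p X \<and> X * W = W * X}"
    using X by blast
next
  fix X assume "X \<in> {X \<in> carrier_mat (2*p) (2*p). skew_hamiltonian p X \<and> X * W = W * X}"
  then have X: "X \<in> carrier_mat (2*p) (2*p)" and "skew_hamiltonian p X" and comm: "X * W = W * X" by auto
  then obtain A where "A \<in> carrier_mat (2*p) (2*p)" "skew_symmetric A" "X = J_mat p * A"
    using skew_hamiltonian_iff_J_mult_skew[OF X] by blast
  moreover have "X * W - W * X = 0\<^sub>m (2*p) (2*p)"
    using comm minus_eq_zero_mat_iff[OF mult_carrier_mat_square[OF X W] mult_carrier_mat_square[OF W X]]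
    by simp
  ultimately show "X \<in> {J_mat p * A | A. A \<in> carrier_mat (2*p) (2*p) \<and> skew_symmetric A \<and>
            (J_mat p * A) * W - W * (J_mat p * A) = 0\<^sub>m (2*p) (2*p)}" by blast
qed

lemma skew_hamiltonian_symplectic_conj:
  assumes symp: "symplectic p M" and Mi: "Mi \<in> carrier_mat (2*p) (2*p)"
    and inv: "M * Mi = 1\<^sub>m (2*p)" and X: "skew_hamiltonian p X"
  shows "skew_hamiltonian p (Mi * X * M)"
proof -
  let ?n = "2*p" and ?J = "J_mat p"
  have M: "M \<in> carrier_mat ?n ?n" and MJM: "transpose_mat M * ?J * M = ?J"
    using symp unfolding symplectic_def by auto
  have Xc: "X \<in> carrier_mat ?n ?n" and JX: "?J * X = transpose_mat X * ?J"
    using X unfolding skew_hamiltonian_def by auto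
  have JMi: "?J * Mi = transpose_mat M * ?J"
  proof -
    have "(transpose_mat M * ?J * M) * Mi = transpose_mat M * ?J * (M * Mi)"
      using M Mi by (simp add: assoc_mult_mat[of _ ?n ?n _ ?n _ ?n])
    then show ?thesis unfolding MJM inv using M by simp
  qed
  have MiJ: "transpose_mat Mi * ?J = ?J * M"
    using arg_cong[OF JMi, of transpose_mat] M Mi
    by (simp add: transpose_mult[of _ ?n ?n _ ?n] transpose_J_mat)
  have "?J * (Mi * X * M) = (?J * Mi) * X * M"
    using M Mi Xc by (simp add: assoc_mult_mat[of _ ?n ?n _ ?n _ ?n])
  also have "\<dots> = transpose_mat M * (?J * X) * M"
    unfolding JMi using M Xc by (simp add: assoc_mult_mat[of _ ?n ?n _ ?n _ ?n])
  also have "\<dots> = transpose_mat M * transpose_mat X * (transpose_mat Mi * ?J)"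
    unfolding JX MiJ using M Mi Xc by (simp add: assoc_mult_mat[of _ ?n ?n _ ?n _ ?n])
  also have "\<dots> = transpose_mat (Mi * X * M) * ?J"
    using M Mi Xc by (simp add: assoc_mult_mat[of _ ?n ?n _ ?n _ ?n] transpose_mult[of _ ?n ?n _ ?n])
  finally show ?thesis unfolding skew_hamiltonian_def using M Mi Xc by simp
qed

definition diag_transpose :: "nat \<Rightarrow> complex mat \<Rightarrow> complex mat" where
  "diag_transpose p P = four_block_mat P (0\<^sub>m p p) (0\<^sub>m p p) (transpose_mat P)"

lemma diag_transpose_carrier[simp]: "P \<in> carrier_mat p p \<Longrightarrow> diag_transpose p P \<in> carrier_mat (2*p) (2*p)"
  unfolding diag_transpose_def by (simp add: mult_2)

lemma poly_mat_eval_diag_transpose: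
  assumes "P \<in> carrier_mat p p"
  shows "poly_mat_eval (2*p) f (diag_transpose p P) = four_block_mat (poly_mat_eval p f P) (0\<^sub>m p p)
    (0\<^sub>m p p) (poly_mat_eval p f (transpose_mat P))"
  using poly_mat_eval_four_block_diag[of P p "transpose_mat P"] assms
  unfolding diag_transpose_def by (simp add: mult_2)

lemma skew_hamiltonian_four_block_mat:
  assumes c: "X1 \<in> carrier_mat p p" "X2 \<in> carrier_mat p p" "X3 \<in> carrier_mat p p" "X4 \<in> carrier_mat p p"
    and X: "skew_hamiltonian p (four_block_mat X1 X2 X3 X4)"
  shows "X4 = transpose_mat X1 \<and> transpose_mat X2 = - X2 \<and> transpose_mat X3 = - X3"
proof -
  let ?X = "four_block_mat X1 X2 X3 X4"
  have "J_mat p * ?X = four_block_mat X3 X4 (- X1) (- X2)"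
    unfolding J_mat_def using c by (subst mult_four_block_mat) auto
  moreover have "transpose_mat ?X * J_mat p =
      four_block_mat (- transpose_mat X3) (transpose_mat X1) (- transpose_mat X4) (transpose_mat X2)"
    unfolding J_mat_def using c by (subst transpose_four_block_mat, auto, subst mult_four_block_mat) auto
  ultimately have "X3 = - transpose_mat X3 \<and> X4 = transpose_mat X1 \<and> - X1 = - transpose_mat X4
      \<and> - X2 = transpose_mat X2"
    using X c unfolding skew_hamiltonian_def by (intro four_block_mat_eqD[of _ p]) auto
  then show ?thesis by (metis uminus_uminus_mat)
qed

text \<open>In block form, commuting with \<open>diag(P, P\<^sup>T)\<close> means \<open>X\<^sub>1 P = P X\<^sub>1\<close>,
  \<open>P X\<^sub>2 = X\<^sub>2 P\<^sup>T\<close> and \<open>P\<^sup>T X\<^sub>3 = X\<^sub>3 P\<close>.\<close>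
lemma skew_hamiltonian_commutant_diag_transpose:
  assumes P: "P \<in> carrier_mat p p" and cycP: "cyclic_vector p P vP"
    and cycT: "cyclic_vector p (transpose_mat P) vT"
    and X: "skew_hamiltonian p X" and XD: "X * diag_transpose p P = diag_transpose p P * X"
  shows "\<exists>f. (\<forall>k\<ge>p. coeff f k = 0) \<and> X = poly_mat_eval (2*p) f (diag_transpose p P)"
proof -
  let ?T = "transpose_mat P"
  have T: "?T \<in> carrier_mat p p" using P by simp
  have Xc: "X \<in> carrier_mat (p + p) (p + p)" using X unfolding skew_hamiltonian_def by (simp add: mult_2)
  obtain X1 X2 X3 X4 where sb: "split_block X p p = (X1, X2, X3, X4)" by (cases "split_block X p p")
  have c: "X1 \<in> carrier_mat p p" "X2 \<in> carrier_mat p p" "X3 \<in> carrier_mat p p" "X4 \<in> carrier_mat p p"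
    and Xeq: "X = four_block_mat X1 X2 X3 X4" using split_block[OF sb] Xc by auto
  have X4: "X4 = transpose_mat X1" and s2: "transpose_mat X2 = - X2" and s3: "transpose_mat X3 = - X3"
    using skew_hamiltonian_four_block_mat[OF c] X Xeq by auto
  have "X * diag_transpose p P = four_block_mat (X1 * P) (X2 * ?T) (X3 * P) (X4 * ?T)"
    unfolding diag_transpose_def Xeq using c P by (subst mult_four_block_mat) auto
  moreover have "diag_transpose p P * X = four_block_mat (P * X1) (P * X2) (?T * X3) (?T * X4)"
    unfolding diag_transpose_def Xeq using c P by (subst mult_four_block_mat) auto
  ultimately have "X1 * P = P * X1 \<and> X2 * ?T = P * X2 \<and> X3 * P = ?T * X3 \<and> X4 * ?T = ?T * X4"
    using XD c P by (intro four_block_mat_eqD[of _ p]) auto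
  then have m1: "X1 * P = P * X1" and m2: "P * X2 = X2 * ?T" and m3: "?T * X3 = X3 * transpose_mat ?T"
    by auto
  obtain f where f: "\<forall>k\<ge>p. coeff f k = 0" and X1: "X1 = poly_mat_eval p f P"
    using commutant_cyclic_eq_poly_mat_eval[OF P cycP c(1) m1] by blast
  have "X2 = 0\<^sub>m p p" by (rule cyclic_intertwiner_skew_eq_zero[OF P c(2) m2 s2 cycT])
  moreover have "X3 = 0\<^sub>m p p" using cyclic_intertwiner_skew_eq_zero[OF T c(3) m3 s3] cycP by simp
  moreover have "X4 = poly_mat_eval p f ?T" using X4 X1 poly_mat_eval_transpose[OF P] by simp
  ultimately have "X = poly_mat_eval (2*p) f (diag_transpose p P)"
    unfolding poly_mat_eval_diag_transpose[OF P] Xeq X1 by simp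
  then show ?thesis using f by blast
qed

section \<open>Regular skew-Hamiltonian matrices\<close>

lemma regular_skew_hamE:
  assumes "regular_skew_ham p W"
  obtains M Mi P vP vT where "symplectic p M" "Mi \<in> carrier_mat (2*p) (2*p)"
    "M * Mi = 1\<^sub>m (2*p)" "Mi * M = 1\<^sub>m (2*p)" "P \<in> carrier_mat p p" "W = M * diag_transpose p P * Mi"
    "cyclic_vector p P vP" "cyclic_vector p (transpose_mat P) vT"
proof -
  from assms obtain M Mi P q where W: "W \<in> carrier_mat (2*p) (2*p)" and symp: "symplectic p M"
    and P: "P \<in> carrier_mat p p" and sim: "similar_mat_wit W (diag_transpose p P) M Mi"
    and mp: "minimal_polynomial p P q" and dq: "degree q = p"
    unfolding regular_skew_ham_def skew_hamiltonian_def diag_transpose_def by blast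
  obtain vP where "cyclic_vector p P vP" using cyclic_vector_exists[OF P mp dq] by blast
  moreover obtain vT where "cyclic_vector p (transpose_mat P) vT"
    using cyclic_vector_exists[OF _ minimal_polynomial_transpose[OF P mp] dq] P by auto
  ultimately show thesis using that symp P sim W unfolding similar_mat_wit_def Let_def by auto
qed

lemma regular_skew_ham_powers_independent:
  assumes W: "regular_skew_ham p W" and low: "\<forall>k\<ge>p. coeff r k = 0"
    and rW: "poly_mat_eval (2*p) r W = 0\<^sub>m (2*p) (2*p)"
  shows "r = 0"
proof -
  obtain M Mi P vP vT where symp: "symplectic p M" and Mi: "Mi \<in> carrier_mat (2*p) (2*p)"
    and inv: "M * Mi = 1\<^sub>m (2*p)" "Mi * M = 1\<^sub>m (2*p)" and P: "P \<in> carrier_mat p p"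
    and Weq: "W = M * diag_transpose p P * Mi" and cycP: "cyclic_vector p P vP"
    using regular_skew_hamE[OF W] by metis
  have M: "M \<in> carrier_mat (2*p) (2*p)" using symp unfolding symplectic_def by simp
  have "poly_mat_eval (2*p) r (diag_transpose p P) = Mi * poly_mat_eval (2*p) r W * M"
    unfolding Weq poly_mat_eval_similar[OF M Mi diag_transpose_carrier[OF P] inv]
    using conj_conj_mat[OF M Mi _ inv(2)] P by simp
  also have "\<dots> = 0\<^sub>m (2*p) (2*p)" using M Mi rW by simp
  finally have D0: "poly_mat_eval (2*p) r (diag_transpose p P) = 0\<^sub>m (2*p) (2*p)" .
  have "poly_mat_eval p r P = 0\<^sub>m p p"
  proof (rule eq_matI)
    fix i j assume "i < dim_row (0\<^sub>m p p :: complex mat)" "j < dim_col (0\<^sub>m p p :: complex mat)"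
    then show "poly_mat_eval p r P $$ (i,j) = 0\<^sub>m p p $$ (i,j)"
      using arg_cong[OF D0, of "\<lambda>A. A $$ (i,j)"] P by (simp add: poly_mat_eval_diag_transpose)
  qed (use P in auto)
  then show "r = 0"
    using cycP low unfolding cyclic_vector_def by auto
qed

lemma regular_skew_ham_commutant:
  assumes W: "regular_skew_ham p W" and X: "skew_hamiltonian p X" and XW: "X * W = W * X"
  shows "\<exists>f. (\<forall>k\<ge>p. coeff f k = 0) \<and> X = poly_mat_eval (2*p) f W"
proof -
  let ?n = "2*p"
  obtain M Mi P vP vT where symp: "symplectic p M" and Mi: "Mi \<in> carrier_mat ?n ?n"
    and inv: "M * Mi = 1\<^sub>m ?n" "Mi * M = 1\<^sub>m ?n" and P: "P \<in> carrier_mat p p"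
    and Weq: "W = M * diag_transpose p P * Mi"
    and cycP: "cyclic_vector p P vP" and cycT: "cyclic_vector p (transpose_mat P) vT"
    using regular_skew_hamE[OF W] by metis
  have M: "M \<in> carrier_mat ?n ?n" using symp unfolding symplectic_def by simp
  have Xc: "X \<in> carrier_mat ?n ?n" using X unfolding skew_hamiltonian_def by simp
  have Wc: "W \<in> carrier_mat ?n ?n" using Weq M Mi P by simp
  have D: "diag_transpose p P = Mi * W * M" using Weq conj_conj_mat[OF M Mi _ inv(2)] P by simp
  have "(Mi * X * M) * diag_transpose p P = diag_transpose p P * (Mi * X * M)"
    unfolding D mult_conj_mat[OF M Mi Xc Wc inv(1)] mult_conj_mat[OF M Mi Wc Xc inv(1)] XW ..
  then obtain f where f: "\<forall>k\<ge>p. coeff f k = 0"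
    and "Mi * X * M = poly_mat_eval ?n f (diag_transpose p P)"
    using skew_hamiltonian_commutant_diag_transpose[OF P cycP cycT
        skew_hamiltonian_symplectic_conj[OF symp Mi inv(1) X]] by blast
  then have "X = poly_mat_eval ?n f W"
    using conj_conj_mat[OF Mi M Xc inv(1)] poly_mat_eval_similar[OF M Mi _ inv] P Weq by simp
  then show ?thesis using f by blast
qed

lemma regular_skew_ham_commutant_eq:
  assumes W: "regular_skew_ham p W"
  shows "{X \<in> carrier_mat (2*p) (2*p). skew_hamiltonian p X \<and> X * W = W * X}
    = {poly_mat_eval (2*p) r W | r. \<forall>k\<ge>p. coeff r k = 0}"
proof (intro equalityI subsetI)
  fix X assume "X \<in> {X \<in> carrier_mat (2*p) (2*p). skew_hamiltonian p X \<and> X * W = W * X}"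
  then show "X \<in> {poly_mat_eval (2*p) r W | r. \<forall>k\<ge>p. coeff r k = 0}"
    using regular_skew_ham_commutant[OF W] by blast
next
  have ham: "skew_hamiltonian p W" using W unfolding regular_skew_ham_def by simp
  then have Wc: "W \<in> carrier_mat (2*p) (2*p)" unfolding skew_hamiltonian_def by simp
  fix X assume "X \<in> {poly_mat_eval (2*p) r W | r. \<forall>k\<ge>p. coeff r k = 0}"
  then obtain r where X: "X = poly_mat_eval (2*p) r W" by blast
  have "X * W = W * X" unfolding X by (rule poly_mat_eval_intertwine[OF Wc Wc Wc refl, symmetric])
  then show "X \<in> {X \<in> carrier_mat (2*p) (2*p). skew_hamiltonian p X \<and> X * W = W * X}"
    using X Wc skew_hamiltonian_poly_mat_eval[OF ham] by simp
qed

section \<open>Spans of matrix powers\<close>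

lemma mat_finsum_index:
  assumes i: "i < n" and j: "j < n" and f: "f \<in> A \<rightarrow> carrier_mat n n"
  shows "finsum (module_mat TYPE(complex) n n) f A $$ (i,j) = (\<Sum>x\<in>A. f x $$ (i,j))"
  using f
proof (induct A rule: infinite_finite_induct)
  case (infinite A)
  interpret V: matrix_vs n n "TYPE(complex)" .
  show ?case using infinite i j by (simp add: V.finsum_infinite)
next
  case empty
  interpret V: matrix_vs n n "TYPE(complex)" .
  show ?case using i j by simp
next
  case (insert x X)
  interpret V: matrix_vs n n "TYPE(complex)" .
  have fX: "f \<in> X \<rightarrow> carrier_mat n n" and fx: "f x \<in> carrier_mat n n" using insert by auto
  have "finsum (module_mat TYPE(complex) n n) f X \<in> carrier_mat n n"
    using V.finsum_closed[OF fX] by simp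
  then show ?case
    unfolding V.finsum_insert[OF insert(1,2) fX fx] sum.insert[OF insert(1,2)]
    using insert(3)[OF fX] fx i j by simp
qed

lemma lincomb_mat_powers:
  assumes W: "W \<in> carrier_mat n n" and inj: "inj_on (\<lambda>k. W ^\<^sub>m k) {..<N}"
  shows "LinearCombinations.module.lincomb (module_mat TYPE(complex) n n) a ((\<lambda>k. W ^\<^sub>m k) ` {..<N}) =
    poly_mat_eval n (\<Sum>k<N. monom (a (W ^\<^sub>m k)) k) W"
proof -
  interpret V: matrix_vs n n "TYPE(complex)" .
  let ?S = "(\<lambda>k. W ^\<^sub>m k) ` {..<N}"
  have S: "?S \<subseteq> carrier_mat n n" using W by auto
  show ?thesis
  proof (rule eq_matI)
    fix i j assume "i < dim_row (poly_mat_eval n (\<Sum>k<N. monom (a (W ^\<^sub>m k)) k) W)"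
      "j < dim_col (poly_mat_eval n (\<Sum>k<N. monom (a (W ^\<^sub>m k)) k) W)"
    then have i: "i < n" and j: "j < n" using W by auto
    have "V.lincomb a ?S $$ (i,j) = (\<Sum>X\<in>?S. a X * X $$ (i,j))"
      unfolding V.lincomb_def by (subst mat_finsum_index[OF i j], insert S W i j, auto intro!: sum.cong)
    also have "\<dots> = (\<Sum>k<N. a (W ^\<^sub>m k) * (W ^\<^sub>m k) $$ (i,j))"
      by (simp add: sum.reindex[OF inj])
    also have "\<dots> = poly_mat_eval n (\<Sum>k<N. monom (a (W ^\<^sub>m k)) k) W $$ (i,j)"
      by (subst poly_mat_eval_index[OF W i j, where N=N]) (auto simp: coeff_sum_monom_below)
    finally show "V.lincomb a ?S $$ (i,j) = poly_mat_eval n (\<Sum>k<N. monom (a (W ^\<^sub>m k)) k) W $$ (i,j)" .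
  qed (use V.lincomb_closed[OF S] W in auto)
qed

lemma inj_on_mat_powers:
  assumes W: "W \<in> carrier_mat n n"
    and indep: "\<And>r. \<forall>k\<ge>N. coeff r k = 0 \<Longrightarrow> poly_mat_eval n r W = 0\<^sub>m n n \<Longrightarrow> r = 0"
  shows "inj_on (\<lambda>k. W ^\<^sub>m k) {..<N}"
proof (rule inj_onI, rule ccontr)
  fix i j assume i: "i \<in> {..<N}" and j: "j \<in> {..<N}" and e: "W ^\<^sub>m i = W ^\<^sub>m j" and ij: "i \<noteq> j"
  define r where "r = monom (1::complex) i + monom (-1) j"
  have "coeff r i = 1" unfolding r_def using ij by (simp add: coeff_monom)
  moreover have "\<forall>k\<ge>N. coeff r k = 0" unfolding r_def using i j by (auto simp: coeff_monom)
  moreover have "poly_mat_eval n r W = 0\<^sub>m n n"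
    unfolding r_def using W e by (simp add: poly_mat_eval_add poly_mat_eval_monom) (intro eq_matI, auto)
  ultimately show False using indep by fastforce
qed

lemma span_mat_powers:
  assumes W: "W \<in> carrier_mat n n" and inj: "inj_on (\<lambda>k. W ^\<^sub>m k) {..<N}"
  shows "LinearCombinations.module.span class_ring (module_mat TYPE(complex) n n) ((\<lambda>k. W ^\<^sub>m k) ` {..<N}) =
    {poly_mat_eval n r W | r. \<forall>k\<ge>N. coeff r k = 0}"
proof -
  interpret V: matrix_vs n n "TYPE(complex)" .
  let ?S = "(\<lambda>k. W ^\<^sub>m k) ` {..<N}"
  have S: "?S \<subseteq> carrier_mat n n" and finS: "finite ?S" using W by auto
  show ?thesis
  proof (intro equalityI subsetI)
    fix Y assume "Y \<in> V.span ?S"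
    then obtain a where "Y = V.lincomb a ?S" using V.finite_in_span[OF finS S] by auto
    then show "Y \<in> {poly_mat_eval n r W | r. \<forall>k\<ge>N. coeff r k = 0}"
      using lincomb_mat_powers[OF W inj] by (auto simp: coeff_sum_monom_below)
  next
    fix Y assume "Y \<in> {poly_mat_eval n r W | r. \<forall>k\<ge>N. coeff r k = 0}"
    then obtain r where low: "\<forall>k\<ge>N. coeff r k = 0" and Y: "Y = poly_mat_eval n r W" by auto
    define a where "a = (\<lambda>X. coeff r (the_inv_into {..<N} (\<lambda>k. W ^\<^sub>m k) X))"
    have "(\<Sum>k<N. monom (a (W ^\<^sub>m k)) k) = r"
      unfolding a_def using poly_eq_sum_monom_below[OF low] by (simp add: the_inv_into_f_f[OF inj])
    then have "V.lincomb a ?S = Y" using lincomb_mat_powers[OF W inj, of a] Y by simp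
    then show "Y \<in> V.span ?S" unfolding V.span_def using finS by blast
  qed
qed

lemma dim_span_mat_powers:
  assumes W: "W \<in> carrier_mat n n"
    and indep: "\<And>r. \<forall>k\<ge>N. coeff r k = 0 \<Longrightarrow> poly_mat_eval n r W = 0\<^sub>m n n \<Longrightarrow> r = 0"
  shows "vectorspace.dim class_ring ((module_mat TYPE(complex) n n)
    \<lparr>carrier := LinearCombinations.module.span class_ring (module_mat TYPE(complex) n n) ((\<lambda>k. W ^\<^sub>m k) ` {..<N})\<rparr>) = N"
proof -
  interpret V: matrix_vs n n "TYPE(complex)" .
  let ?S = "(\<lambda>k. W ^\<^sub>m k) ` {..<N}"
  have inj: "inj_on (\<lambda>k. W ^\<^sub>m k) {..<N}" by (rule inj_on_mat_powers[OF W indep])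
  have S: "?S \<subseteq> carrier_mat n n" and finS: "finite ?S" using W by auto
  have "V.lin_indpt ?S"
  proof (rule V.finite_lin_indpt2[OF finS S])
    fix a :: "complex mat \<Rightarrow> complex" assume "V.lincomb a ?S = 0\<^sub>m n n"
    then have r0: "(\<Sum>k<N. monom (a (W ^\<^sub>m k)) k) = 0"
      using lincomb_mat_powers[OF W inj, of a] by (intro indep) (auto simp: coeff_sum_monom_below)
    show "\<forall>X\<in>?S. a X = 0"
    proof
      fix X assume "X \<in> ?S"
      then obtain k where "k < N" and "X = W ^\<^sub>m k" by auto
      then have "coeff (\<Sum>k<N. monom (a (W ^\<^sub>m k)) k) k = a X" by (simp add: coeff_sum_monom_below)
      then show "a X = 0" using r0 by simp
    qed
  qed
  then have "vectorspace.dim class_ring (V.span_vs ?S) = card ?S"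
    using V.dim_span[OF S finS] unfolding maximal_def by auto
  then show ?thesis using card_image[OF inj] by simp
qed

theorem mainTheorem7:
  fixes p :: nat and B :: "complex mat"
  assumes "B \<in> carrier_mat (2*p) (2*p)"
    and "skew_symmetric B"
    and "regular_skew_ham p (J_mat p * B)"
  shows "{J_mat p * A | A. A \<in> carrier_mat (2*p) (2*p) \<and> skew_symmetric A \<and>
            (J_mat p * A) * (J_mat p * B) - (J_mat p * B) * (J_mat p * A) = 0\<^sub>m (2*p) (2*p)}
         = LinearCombinations.module.span class_ring (module_mat TYPE(complex) (2*p) (2*p))
             {(J_mat p * B) ^\<^sub>m k | k. k < p}
       \<and> vectorspace.dim class_ring
           ((module_mat TYPE(complex) (2*p) (2*p))
              \<lparr>carrier := LinearCombinations.module.span class_ring (module_mat TYPE(complex) (2*p) (2*p))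
                 {(J_mat p * B) ^\<^sub>m k | k. k < p}\<rparr>) = p"
proof -
  define W where "W = J_mat p * B"
  have reg: "regular_skew_ham p W" using assms(3) unfolding W_def .
  have Wc: "W \<in> carrier_mat (2*p) (2*p)" using assms(1) unfolding W_def by simp
  have powers: "{W ^\<^sub>m k | k. k < p} = (\<lambda>k. W ^\<^sub>m k) ` {..<p}" by auto
  have indep: "\<And>r. \<forall>k\<ge>p. coeff r k = 0 \<Longrightarrow> poly_mat_eval (2*p) r W = 0\<^sub>m (2*p) (2*p) \<Longrightarrow> r = 0"
    by (rule regular_skew_ham_powers_independent[OF reg])
  have "{J_mat p * A | A. A \<in> carrier_mat (2*p) (2*p) \<and> skew_symmetric A \<and>
          (J_mat p * A) * W - W * (J_mat p * A) = 0\<^sub>m (2*p) (2*p)}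
      = {poly_mat_eval (2*p) r W | r. \<forall>k\<ge>p. coeff r k = 0}"
    unfolding J_mult_skew_commutant_eq[OF Wc] regular_skew_ham_commutant_eq[OF reg] ..
  also have "\<dots> = LinearCombinations.module.span class_ring (module_mat TYPE(complex) (2*p) (2*p)) {W ^\<^sub>m k | k. k < p}"
    unfolding powers by (rule span_mat_powers[OF Wc inj_on_mat_powers[OF Wc, where N = p, OF indep], symmetric])
  finally show ?thesis
    unfolding W_def[symmetric] powers using dim_span_mat_powers[OF Wc, where N = p, OF indep] by simp
qed

end
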